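(* Let $\Phi(h)$ be a consistent one-step method (i.e.\ of order $p\geq 1$) and let $\alpha_1,\dots,\alpha_l\in\mathbb{C}$ with $\sum_{i=1}^l\alpha_i=1$, so that the composition $$\Psi(h)=\prod_{i=1}^{l}\Phi(\alpha_i h)=\Phi(\alpha_1h)\cdots\Phi(\alpha_lh)$$ is also consistent. Suppose there exists $k$, $1\leq k\leq l$, with $\Re(\alpha_k)<0$. Then for any $\beta_1,\dots,\beta_m\in\mathbb{C}$ such that the method $$\prod_{j=1}^{m}\Psi(\beta_j h)=\prod_{j=1}^{m}\Big(\prod_{i=1}^{l}\Phi(\beta_j\alpha_i h)\Big)$$ is consistent (i.e.\ $\sum_{j=1}^m\beta_j=1$), there exists $j$, $1\le j\le m$, such that $\Re(\beta_j\alpha_k)<0$.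
   Context: A method is a family of (approximate) evolution operators $\Phi(h)$ depending on a step size $h$, approximating the exact flow $e^{h(A+B)}$ of $\dot u = Au+Bu$; it is of order $p$ if $\Phi(h)-e^{h(A+B)}=\mathcal{O}(h^{p+1})$ formally, and consistent if of order at least $1$. Products of methods are interpreted from left to right. A composition $\prod_i\Phi(\gamma_ih)$ of a consistent method is consistent iff $\sum_i\gamma_i=1$. *)

theory Defs
  imports Complex_Main
begin

end

theory Submission
  imports Defs
begin

lemma Re_sum_neg_imp_ex_Re_neg:
  fixes f :: "'a \<Rightarrow> complex"
  assumes "Re (sum f A) < 0"
  shows "\<exists>a\<in>A. Re (f a) < 0"
proof (rule ccontr)
  assume "\<not> (\<exists>a\<in>A. Re (f a) < 0)"
  then have "0 \<le> (\<Sum>a\<in>A. Re (f a))"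
    by (intro sum_nonneg) (auto simp: not_less)
  with assms show False
    by (simp add: Re_sum)
qed

theorem lemma2p1:
  fixes \<alpha> \<beta> :: "nat \<Rightarrow> complex" and l m k :: nat
  assumes Psi_consistent: "(\<Sum>i=1..l. \<alpha> i) = 1"
    and k: "1 \<le> k" "k \<le> l"
    and neg: "Re (\<alpha> k) < 0"
    and comp_consistent: "(\<Sum>j=1..m. \<beta> j) = 1"
  shows "\<exists>j\<in>{1..m}. Re (\<beta> j * \<alpha> k) < 0"
proof -
  have "(\<Sum>j=1..m. \<beta> j * \<alpha> k) = \<alpha> k"
    using comp_consistent by (simp add: sum_distrib_right[symmetric])
  with neg show ?thesis
    by (intro Re_sum_neg_imp_ex_Re_neg) simp
qed

end
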